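(* Let $(\hat{x}_i,\hat{a}_i,\hat{y}_i)$, $i=1,\dots,N$, be observed data points in $\mathbb{R}^n\times\{0,1\}\times\mathbb{R}$ with empirical distribution $\hat{\mathbb{P}}^N=\frac1N\sum_{i=1}^N\delta_{(\hat{x}_i,\hat{a}_i,\hat{y}_i)}$ and empirical marginals $\hat{p}^N_a=\frac1N\#\{i:\hat{a}_i=a\}$. Let $\alpha,\beta\ge0$, let $c((x,a,y),(x',a',y'))=\alpha\|x-x'\|+\infty\cdot|a-a'|+\beta|y-y'|$ (with $\infty\cdot0=0$), and $W_c^2(\mathbb{P},\mathbb{Q})=\inf_{\pi\in\Pi(\mathbb{P},\mathbb{Q})}\mathbb{E}_\pi[c^2]$. Let $\mathcal{F}_{\mathcal{R}}$ be a set of probability distributions on $\mathbb{R}^n\times\{0,1\}\times\mathbb{R}$ and $\mathcal{F}_{\mathcal{R}}(\hat{p}^N)=\{\mathbb{Q}\in\mathcal{F}_{\mathcal{R}}:\mathbb{Q}(A=a)=\hat{p}^N_a\ \forall a\in\{0,1\}\}$. Suppose some $\mathbb{Q}\in\mathcal{F}_{\mathcal{R}}$ satisfies $W_c^2(\hat{\mathbb{P}}^N,\mathbb{Q})<\infty$. Then $$\inf_{\mathbb{Q}\in\mathcal{F}_{\mathcal{R}}}W_c^2(\hat{\mathbb{P}}^N,\mathbb{Q})=\inf_{\mathbb{Q}\in\mathcal{F}_{\mathcal{R}}(\hat{p}^N)}W_c^2(\hat{\mathbb{P}}^N,\mathbb{Q}).$$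
   Context: $\|\cdot\|$ is the Euclidean norm; $\Pi(\mathbb{P},\mathbb{Q})$ is the set of couplings of $\mathbb{P}$ and $\mathbb{Q}$. In the paper, $\mathcal{F}_{\mathcal{R}}$ is the set of distributions relative to which a regressor $\mathcal{R}:\mathbb{R}^n\to\mathbb{R}$ is fair under a chosen fairness criterion. *)

theory Defs
  imports "HOL-Probability.Probability"
begin

text \<open>Sample space R^n x {0,1} x R; the sensitive attribute {0,1} is encoded as bool
  (True = 1, False = 0), with the discrete sigma-algebra; R^n and R carry Borel sets.\<close>

definition Zspace :: "((real^'n) \<times> bool \<times> real) measure" where
  "Zspace = borel \<Otimes>\<^sub>M (count_space UNIV \<Otimes>\<^sub>M borel)"

definition prob_dists :: "((real^'n) \<times> bool \<times> real) measure set" where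
  "prob_dists = {Q. prob_space Q \<and> sets Q = sets Zspace}"

definition couplings :: "'a measure \<Rightarrow> 'a measure \<Rightarrow> ('a \<times> 'a) measure set" where
  "couplings P Q = {\<pi>. prob_space \<pi> \<and> sets \<pi> = sets (P \<Otimes>\<^sub>M Q)
      \<and> distr \<pi> P fst = P \<and> distr \<pi> Q snd = Q}"

definition cost :: "real \<Rightarrow> real \<Rightarrow> (real^'n) \<times> bool \<times> real \<Rightarrow> (real^'n) \<times> bool \<times> real \<Rightarrow> ennreal" where
  "cost \<alpha> \<beta> z z' = (case z of (x, a, y) \<Rightarrow> case z' of (x', a', y') \<Rightarrow>
      ennreal (\<alpha> * norm (x - x')) + (if a = a' then 0 else \<top>) + ennreal (\<beta> * \<bar>y - y'\<bar>))"

definition W2 :: "real \<Rightarrow> real \<Rightarrow> ((real^'n) \<times> bool \<times> real) measure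
    \<Rightarrow> ((real^'n) \<times> bool \<times> real) measure \<Rightarrow> ennreal" where
  "W2 \<alpha> \<beta> P Q = (INF \<pi> \<in> couplings P Q. \<integral>\<^sup>+ w. (cost \<alpha> \<beta> (fst w) (snd w))^2 \<partial>\<pi>)"

text \<open>Empirical distribution (1/N) sum_{i=1}^N delta_{z_i}: pushforward of the uniform
  distribution on the indices {1..N}.\<close>
definition empirical :: "nat \<Rightarrow> (nat \<Rightarrow> (real^'n) \<times> bool \<times> real) \<Rightarrow> ((real^'n) \<times> bool \<times> real) measure" where
  "empirical N z = distr (uniform_count_measure {1..N}) Zspace z"

definition emp_marg :: "nat \<Rightarrow> (nat \<Rightarrow> bool) \<Rightarrow> bool \<Rightarrow> real" where
  "emp_marg N a b = real (card {i \<in> {1..N}. a i = b}) / real N"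

end

theory Submission
  imports Defs
begin

text \<open>The cost charges \<open>\<infinity>\<close> for changing the sensitive attribute, so a coupling of finite
  expected squared cost moves almost no mass between the attribute classes; its two marginals
  therefore give the same mass to each class. Every distribution whose attribute marginal
  differs from the empirical one is thus at distance \<open>\<infinity>\<close>, and dropping such distributions
  leaves the infimum unchanged.\<close>

lemma INF_eq_INF_subset_if_top:
  fixes f :: "'a \<Rightarrow> 'b::complete_lattice"
  assumes "G \<subseteq> F" and "\<And>x. x \<in> F - G \<Longrightarrow> f x = top"
  shows "(INF x\<in>F. f x) = (INF x\<in>G. f x)"
proof -
  have "F = G \<union> (F - G)" using assms(1) by blast
  then have "(INF x\<in>F. f x) = (INF x\<in>G. f x) \<sqinter> (INF x\<in>F - G. f x)"
    by (metis INF_union)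
  then show ?thesis using assms(2) by simp
qed

lemma measure_coupling_marginals_eq:
  assumes \<pi>: "\<pi> \<in> couplings P Q" and "A \<in> sets P" and "A \<in> sets Q"
    and AE: "AE w in \<pi>. fst w \<in> A \<longleftrightarrow> snd w \<in> A"
  shows "measure P A = measure Q A"
proof -
  have sets_\<pi>: "sets \<pi> = sets (P \<Otimes>\<^sub>M Q)" and "distr \<pi> P fst = P" "distr \<pi> Q snd = Q"
    using \<pi> by (auto simp: couplings_def)
  have fst: "fst \<in> measurable \<pi> P" and snd: "snd \<in> measurable \<pi> Q"
    by (simp_all add: measurable_cong_sets[OF sets_\<pi> refl])
  have "measure P A = measure \<pi> (fst -` A \<inter> space \<pi>)"
    using measure_distr[OF fst \<open>A \<in> sets P\<close>] \<open>distr \<pi> P fst = P\<close> by simp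
  also have "\<dots> = measure \<pi> (snd -` A \<inter> space \<pi>)"
    using AE measurable_sets[OF fst \<open>A \<in> sets P\<close>] measurable_sets[OF snd \<open>A \<in> sets Q\<close>]
    by (intro measure_eq_AE) auto
  also have "\<dots> = measure Q A"
    using measure_distr[OF snd \<open>A \<in> sets Q\<close>] \<open>distr \<pi> Q snd = Q\<close> by simp
  finally show ?thesis .
qed

lemma space_Zspace: "space Zspace = UNIV"
  by (simp add: Zspace_def space_pair_measure)

lemma measurable_attribute: "(\<lambda>z. fst (snd z)) \<in> measurable Zspace (count_space UNIV)"
  unfolding Zspace_def by measurable

lemma attribute_class_in_sets_Zspace: "{z. fst (snd z) = b} \<in> sets Zspace"
  using measurable_sets[OF measurable_attribute, of "{b}"] by (simp add: space_Zspace vimage_def)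

lemma cost_eq_top_if_attribute_changes:
  "fst (snd z) \<noteq> fst (snd z') \<Longrightarrow> cost \<alpha> \<beta> z z' = \<top>"
  by (cases z; cases z') (simp add: cost_def)

lemma AE_coupling_preserves_attribute:
  fixes P Q :: "((real^'n) \<times> bool \<times> real) measure"
  assumes "sets P = sets Zspace" and "sets Q = sets Zspace" and "\<pi> \<in> couplings P Q"
    and finite: "(\<integral>\<^sup>+ w. (cost \<alpha> \<beta> (fst w) (snd w))^2 \<partial>\<pi>) < \<top>"
  shows "AE w in \<pi>. fst (snd (fst w)) = fst (snd (snd w))"
proof -
  define D :: "(((real^'n) \<times> bool \<times> real) \<times> (real^'n) \<times> bool \<times> real) set"
    where "D = {w. fst (snd (fst w)) \<noteq> fst (snd (snd w))}"
  have sets_\<pi>: "sets \<pi> = sets (Zspace \<Otimes>\<^sub>M Zspace)"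
    using assms(1-3) sets_pair_measure_cong by (auto simp: couplings_def)
  have "(\<lambda>w. (fst (snd (fst w)), fst (snd (snd w)))) \<in> measurable \<pi> (count_space UNIV)"
    unfolding measurable_cong_sets[OF sets_\<pi> refl] Zspace_def by measurable
  from measurable_sets[OF this, of "{p. fst p \<noteq> snd p}"]
  have D: "D \<in> sets \<pi>"
    using sets_eq_imp_space_eq[OF sets_\<pi>] by (simp add: D_def vimage_def space_pair_measure space_Zspace)
  have "\<top> * emeasure \<pi> D = (\<integral>\<^sup>+ w. \<top> * indicator D w \<partial>\<pi>)"
    using nn_integral_cmult_indicator[OF D] by simp
  also have "\<dots> \<le> (\<integral>\<^sup>+ w. (cost \<alpha> \<beta> (fst w) (snd w))^2 \<partial>\<pi>)"
    by (intro nn_integral_mono)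
      (auto simp: D_def indicator_def cost_eq_top_if_attribute_changes power2_eq_square)
  finally have "emeasure \<pi> D = 0"
    using finite by (auto simp: ennreal_top_mult split: if_splits)
  then show ?thesis
    using D by (intro AE_I'[of D]) (auto simp: D_def)
qed

lemma attribute_marginal_eq_if_W2_finite:
  assumes "sets P = sets Zspace" and "sets Q = sets Zspace" and "W2 \<alpha> \<beta> P Q < \<top>"
  shows "measure Q {z. fst (snd z) = b} = measure P {z. fst (snd z) = b}"
proof -
  obtain \<pi> where "\<pi> \<in> couplings P Q" "(\<integral>\<^sup>+ w. (cost \<alpha> \<beta> (fst w) (snd w))^2 \<partial>\<pi>) < \<top>"
    using assms(3) unfolding W2_def INF_less_iff by blast
  then have "AE w in \<pi>. fst (snd (fst w)) = fst (snd (snd w))"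
    by (rule AE_coupling_preserves_attribute[OF assms(1,2)])
  then have "AE w in \<pi>. fst w \<in> {z. fst (snd z) = b} \<longleftrightarrow> snd w \<in> {z. fst (snd z) = b}"
    by eventually_elim auto
  then show ?thesis
    using measure_coupling_marginals_eq[OF \<open>\<pi> \<in> couplings P Q\<close>] assms(1,2)
      attribute_class_in_sets_Zspace by (metis (no_types))
qed

lemma measure_empirical_attribute_class:
  "measure (empirical N z) {v. fst (snd v) = b} = emp_marg N (\<lambda>i. fst (snd (z i))) b"
proof -
  have z: "z \<in> measurable (uniform_count_measure {1..N}) Zspace"
    by (simp add: measurable_def space_uniform_count_measure sets_uniform_count_measure
        space_Zspace)
  have "measure (empirical N z) {v. fst (snd v) = b}
      = measure (uniform_count_measure {1..N}) (z -` {v. fst (snd v) = b} \<inter> {1..N})"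
    using measure_distr[OF z attribute_class_in_sets_Zspace]
    by (simp add: empirical_def space_uniform_count_measure)
  also have "z -` {v. fst (snd v) = b} \<inter> {1..N} = {i \<in> {1..N}. fst (snd (z i)) = b}"
    by auto
  also have "measure (uniform_count_measure {1..N}) \<dots> = emp_marg N (\<lambda>i. fst (snd (z i))) b"
    by (subst measure_uniform_count_measure) (auto simp: emp_marg_def)
  finally show ?thesis .
qed

theorem theorem1:
  fixes N :: nat and xh :: "nat \<Rightarrow> real^'n" and ah :: "nat \<Rightarrow> bool" and yh :: "nat \<Rightarrow> real"
    and \<alpha> \<beta> :: real and F :: "((real^'n) \<times> bool \<times> real) measure set"
  assumes "N \<ge> 1" and "\<alpha> \<ge> 0" and "\<beta> \<ge> 0"
    and "F \<subseteq> prob_dists"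
    and "\<exists>Q\<in>F. W2 \<alpha> \<beta> (empirical N (\<lambda>i. (xh i, ah i, yh i))) Q < \<top>"
  shows "(INF Q\<in>F. W2 \<alpha> \<beta> (empirical N (\<lambda>i. (xh i, ah i, yh i))) Q)
       = (INF Q\<in>{Q\<in>F. \<forall>b. measure Q {z \<in> space Q. fst (snd z) = b} = emp_marg N ah b}.
            W2 \<alpha> \<beta> (empirical N (\<lambda>i. (xh i, ah i, yh i))) Q)"
proof (rule INF_eq_INF_subset_if_top)
  fix Q
  assume Q: "Q \<in> F - {Q\<in>F. \<forall>b. measure Q {z \<in> space Q. fst (snd z) = b} = emp_marg N ah b}"
  define P where "P = empirical N (\<lambda>i. (xh i, ah i, yh i))"
  have "sets Q = sets Zspace" using Q assms(4) by (auto simp: prob_dists_def)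
  moreover have "sets P = sets Zspace" by (simp add: P_def empirical_def)
  moreover have "measure P {z. fst (snd z) = b} = emp_marg N ah b" for b
    using measure_empirical_attribute_class[of N "\<lambda>i. (xh i, ah i, yh i)" b] by (simp add: P_def)
  ultimately have "\<not> W2 \<alpha> \<beta> P Q < \<top>"
    using Q attribute_marginal_eq_if_W2_finite[of P Q] sets_eq_imp_space_eq[of Q Zspace]
    by (auto simp: space_Zspace)
  then show "W2 \<alpha> \<beta> (empirical N (\<lambda>i. (xh i, ah i, yh i))) Q = \<top>"
    by (simp add: P_def less_top[symmetric])
qed auto

end
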